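(* Let $n$ be a positive integer, let $u:2^{[n]}\to\mathbb{R}_{\ge 0}$ be a normalized ($u(\emptyset)=0$), monotone, submodular and second-order supermodular set function, and let $c:2^{[n]}\to\mathbb{R}_{\ge 0}$ be the modular set function $c(S)=\sum_{i\in S}c_i$ given by positive costs $c_1,\dots,c_n>0$. Fix $\epsilon>0$ and let $\pi$ be a $d$-approximate permutation for the Min-Sum Submodular Cover instance $(u,c)$. Run the local search algorithm described in the context with inputs $\epsilon,u,c,\pi$. If the algorithm does not converge before terminating, then the permutation it returns (after $2n^3\log(d/\epsilon)$ iterations) is a $(4+\epsilon)$-approximation for the Min-Sum Submodular Cover instance $(u,c)$.
   Context: Notation: $[n]=\{1,\dots,n\}$, and $f(e\mid S):=f(S\cup\{e\})-f(S)$. A set function $f$ on $2^{[n]}$ is monotone if $f(S\cup\{i\})\ge f(S)$, submodular if $f(i\mid S)\ge f(i\mid S\cup\{j\})$, and second-order supermodular if $f(i\mid S)-f(i\mid S\cup\{j\})\ge f(i\mid S\cup\{k\})-f(i\mid S\cup\{k,j\})$, each for all $S\subseteq[n]$ and all $i,j,k\in[n]\setminus S$. Min-Sum Submodular Cover: given $u$ and $c$, find a permutation of $[n]$ minimizing $\sum_{i=1}^n c(S_i)\,(u(S_i)-u(S_{i-1}))$, where $S_i$ is the set of the first $i$ elements of the permutation ($S_0=\emptyset$). A permutation is a $d$-approximation if its objective is at most $d$ times the optimum. Local search algorithm (Algorithm 1): input $\epsilon>0$, $u$, $c$, and an initial permutation $\pi$ which is a $d$-approximation. A neighbor of $\pi$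 is a permutation obtained from $\pi$ by removing the element at some position $i$ and reinserting it at some position $j$. The algorithm repeats for at most $2n^3\log(d/\epsilon)$ iterations: compute the neighbor $\pi^*$ of $\pi$ with smallest objective value (keeping $\pi^*=\pi$ unless some neighbor has strictly smaller objective); if $\pi^*=\pi$, the algorithm has converged and returns $\pi$; otherwise set $\pi\gets\pi^*$. If the iteration bound is reached without convergence, it returns the current $\pi$. *)

theory Defs
  imports Complex_Main "HOL-Combinatorics.Multiset_Permutations"
begin

text \<open>Ground set [n] = {1..n}; set functions are functions nat set => real,
  only their values on subsets of {1..n} matter.\<close>

definition marg :: "(nat set \<Rightarrow> real) \<Rightarrow> nat \<Rightarrow> nat set \<Rightarrow> real" where
  "marg f e S = f (S \<union> {e}) - f S"

definition monotone_sf :: "nat \<Rightarrow> (nat set \<Rightarrow> real) \<Rightarrow> bool" where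
  "monotone_sf n f \<longleftrightarrow> (\<forall>S i. S \<subseteq> {1..n} \<and> i \<in> {1..n} - S \<longrightarrow> f (S \<union> {i}) \<ge> f S)"

definition submodular_sf :: "nat \<Rightarrow> (nat set \<Rightarrow> real) \<Rightarrow> bool" where
  "submodular_sf n f \<longleftrightarrow> (\<forall>S i j. S \<subseteq> {1..n} \<and> i \<in> {1..n} - S \<and> j \<in> {1..n} - S
      \<longrightarrow> marg f i S \<ge> marg f i (S \<union> {j}))"

definition second_order_supermodular_sf :: "nat \<Rightarrow> (nat set \<Rightarrow> real) \<Rightarrow> bool" where
  "second_order_supermodular_sf n f \<longleftrightarrow>
     (\<forall>S i j k. S \<subseteq> {1..n} \<and> i \<in> {1..n} - S \<and> j \<in> {1..n} - S \<and> k \<in> {1..n} - S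
      \<longrightarrow> marg f i S - marg f i (S \<union> {j}) \<ge> marg f i (S \<union> {k}) - marg f i (S \<union> {k, j}))"

text \<open>Permutations of [n] are lists; S_i = set (take i p).\<close>

definition perms :: "nat \<Rightarrow> nat list set" where
  "perms n = permutations_of_set {1..n}"

definition mssc_obj :: "(nat set \<Rightarrow> real) \<Rightarrow> (nat set \<Rightarrow> real) \<Rightarrow> nat list \<Rightarrow> real" where
  "mssc_obj u c p = (\<Sum>i = 1..length p. c (set (take i p)) * (u (set (take i p)) - u (set (take (i - 1) p))))"

definition mssc_opt :: "nat \<Rightarrow> (nat set \<Rightarrow> real) \<Rightarrow> (nat set \<Rightarrow> real) \<Rightarrow> real" where
  "mssc_opt n u c = Min (mssc_obj u c ` perms n)"

definition is_approx :: "nat \<Rightarrow> (nat set \<Rightarrow> real) \<Rightarrow> (nat set \<Rightarrow> real) \<Rightarrow> real \<Rightarrow> nat list \<Rightarrow> bool" where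
  "is_approx n u c d p \<longleftrightarrow> p \<in> perms n \<and> mssc_obj u c p \<le> d * mssc_opt n u c"

text \<open>Remove the element at (0-based) position i and reinsert it at position j.\<close>
definition move :: "nat \<Rightarrow> nat \<Rightarrow> 'a list \<Rightarrow> 'a list" where
  "move i j p = (let r = take i p @ drop (Suc i) p in take j r @ [p ! i] @ drop j r)"

definition neighbors :: "'a list \<Rightarrow> 'a list set" where
  "neighbors p = {move i j p | i j. i < length p \<and> j < length p}"

text \<open>One non-converged iteration: q is a neighbor of p of smallest objective, and
  it is strictly better than p (so the algorithm moves to q).\<close>
definition ls_step :: "(nat set \<Rightarrow> real) \<Rightarrow> (nat set \<Rightarrow> real) \<Rightarrow> nat list \<Rightarrow> nat list \<Rightarrow> bool" where
  "ls_step u c p q \<longleftrightarrow> q \<in> neighbors p \<and> (\<forall>q' \<in> neighbors p. mssc_obj u c q \<le> mssc_obj u c q')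
      \<and> mssc_obj u c q < mssc_obj u c p"

definition ls_iters :: "nat \<Rightarrow> real \<Rightarrow> real \<Rightarrow> nat" where
  "ls_iters n d \<epsilon> = nat \<lceil>2 * real n ^ 3 * ln (d / \<epsilon>)\<rceil>"

end

theory Submission
  imports Defs
begin

(* Let F be the objective, OPT = F(sigma) for an optimal permutation sigma, and let D bound the
  improvement of F over all neighbours of p.  The key inequality is F(p) <= 4 OPT + 2 n D.
  For modular costs F(p) = sum_j c(p_j) (u([n]) - u(S_j)).  Each term is split along sigma at the
  first q with 2 c(sigma_1..sigma_q) > c(p_1..p_j): the pairs beyond this point ("late") are paid
  for by 2 OPT, and by submodularity the remaining ("early") pairs are bounded by marginal gains
  u(sigma_q | S_j); moving sigma_q forward in p shows that those add up to at most n D + F(p)/2.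
  A step of the algorithm that has not converged realises the largest improvement D, so it shrinks
  F - 4 OPT by the factor 1 - 1/(2n); after ls_iters steps the excess is at most eps OPT. *)

lemma sum_prefix_sums_mult_diff:
  fixes a b :: "nat \<Rightarrow> real"
  shows "(\<Sum>j<N. (\<Sum>i<Suc j. a i) * (b (Suc j) - b j)) = (\<Sum>j<N. a j * (b N - b j))"
proof (induction N)
  case (Suc N)
  have "(\<Sum>j<Suc N. a j * (b (Suc N) - b j))
      = (\<Sum>j<Suc N. a j * (b N - b j)) + (\<Sum>j<Suc N. a j) * (b (Suc N) - b N)"
    by (simp add: algebra_simps sum_subtractf sum.distrib sum_distrib_left sum_distrib_right)
  then show ?case using Suc by simp
qed simp

lemma down_closed_lessThan:
  fixes n :: nat
  assumes "\<And>q q'. q \<le> q' \<Longrightarrow> q' < n \<Longrightarrow> P q' \<Longrightarrow> P q"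
  obtains m where "m \<le> n" "{..<n} \<inter> {q. P q} = {..<m}" "{..<n} \<inter> - {q. P q} = {m..<n}"
proof -
  define m where "m = (LEAST q. q = n \<or> \<not> P q)"
  have "m \<le> n" unfolding m_def by (rule Least_le) simp
  have "P q \<longleftrightarrow> q < m" if "q < n" for q
  proof
    assume "P q"
    show "q < m"
    proof (rule ccontr)
      have "m = n \<or> \<not> P m" unfolding m_def by (rule LeastI[of _ n]) simp
      moreover assume "\<not> q < m"
      ultimately show False using assms[of m q] \<open>P q\<close> that by auto
    qed
  next
    assume "q < m"
    then show "P q" using not_less_Least[of q "\<lambda>q. q = n \<or> \<not> P q"] that unfolding m_def by auto
  qed
  with \<open>m \<le> n\<close> show thesis by (intro that[of m]) auto
qed

lemma sum_le_of_prefix_sums_le: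
  fixes a :: "nat \<Rightarrow> real"
  assumes "\<And>i. i < n \<Longrightarrow> 0 \<le> a i" and "J \<subseteq> {..<n}"
    and "\<And>j. j \<in> J \<Longrightarrow> (\<Sum>i<Suc j. a i) \<le> X" and "0 \<le> X"
  shows "sum a J \<le> X"
proof (cases "J = {}")
  case False
  have "finite J" using assms(2) finite_subset by blast
  then have "Max J \<in> J" "J \<subseteq> {..<Suc (Max J)}" using False by (auto simp: less_Suc_eq_le)
  moreover have "Suc (Max J) \<le> n" using \<open>Max J \<in> J\<close> assms(2) by auto
  ultimately have "sum a J \<le> (\<Sum>i<Suc (Max J). a i)" using assms(1) by (intro sum_mono2) auto
  also have "\<dots> \<le> X" using assms(3) \<open>Max J \<in> J\<close> .
  finally show ?thesis .
qed (simp add: assms(4))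

lemma marg_eq_0: "e \<in> S \<Longrightarrow> marg u e S = 0"
  unfolding marg_def by (simp add: insert_absorb)

locale submodular_cover =
  fixes n :: nat and u :: "nat set \<Rightarrow> real" and cc :: "nat \<Rightarrow> real"
  assumes monotone: "monotone_sf n u" and submodular: "submodular_sf n u"
    and cost_pos: "\<forall>i \<in> {1..n}. cc i > 0"
begin

lemma marg_nonneg: "S \<subseteq> {1..n} \<Longrightarrow> e \<in> {1..n} \<Longrightarrow> 0 \<le> marg u e S"
  using monotone unfolding monotone_sf_def marg_def by (cases "e \<in> S") (auto simp: insert_absorb)

lemma u_mono:
  assumes "S \<subseteq> T" "T \<subseteq> {1..n}"
  shows "u S \<le> u T"
proof -
  have "u S \<le> u (S \<union> F)" if "finite F" "S \<union> F \<subseteq> {1..n}" for F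
    using that
  proof (induction F rule: finite_induct)
    case (insert x F)
    then have "u S \<le> u (S \<union> F)" by auto
    also have "\<dots> \<le> u (S \<union> insert x F)"
      using marg_nonneg[of "S \<union> F" x] insert.prems unfolding marg_def by auto
    finally show ?case .
  qed simp
  moreover have "finite (T - S)" using assms(2) finite_subset by blast
  moreover have "T = S \<union> (T - S)" using assms(1) by blast
  ultimately show ?thesis using assms(2) by metis
qed

lemma marg_antimono:
  assumes "S \<subseteq> T" "T \<subseteq> {1..n}" "e \<in> {1..n}"
  shows "marg u e T \<le> marg u e S"
proof -
  have "marg u e (S \<union> F) \<le> marg u e S" if "finite F" "S \<union> F \<subseteq> {1..n}" for F
    using that
  proof (induction F rule: finite_induct)
    case (insert x F)
    then have "marg u e (S \<union> F) \<le> marg u e S" by auto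
    moreover have "marg u e (S \<union> F \<union> {x}) \<le> marg u e (S \<union> F)"
    proof (cases "e \<in> S \<union> F \<union> {x}")
      case True
      then show ?thesis using marg_nonneg[of "S \<union> F" e] insert.prems assms(3)
        by (auto simp: marg_eq_0)
    next
      case False
      then show ?thesis using submodular insert.prems assms(3) unfolding submodular_sf_def
        by (cases "x \<in> S \<union> F") (auto simp: insert_absorb)
    qed
    ultimately show ?case by simp
  qed simp
  moreover have "finite (T - S)" using assms(2) finite_subset by blast
  moreover have "T = S \<union> (T - S)" using assms(1) by blast
  ultimately show ?thesis using assms(2) by metis
qed

lemma union_le_sum_marg:
  assumes "S \<subseteq> {1..n}" "T \<subseteq> {1..n}"
  shows "u (S \<union> T) \<le> u S + (\<Sum>x\<in>T. marg u x S)"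
proof -
  have "u (S \<union> F) \<le> u S + (\<Sum>x\<in>F. marg u x S)" if "finite F" "F \<subseteq> {1..n}" for F
    using that
  proof (induction F rule: finite_induct)
    case (insert x F)
    have "u (S \<union> insert x F) = u (S \<union> F) + marg u x (S \<union> F)"
      unfolding marg_def by (simp add: insert_commute)
    also have "\<dots> \<le> u (S \<union> F) + marg u x S"
      using marg_antimono[of S "S \<union> F" x] insert.prems assms(1) by auto
    finally show ?case using insert by simp
  qed simp
  then show ?thesis using assms(2) finite_subset by blast
qed

end

(* Summation by parts turns the objective for modular costs into sum_j c(p_j) (u(set p) - u(S_j)):
  each element pays for the utility still uncovered when it is chosen.  residual_cost is this sum
  for a list appended after an already chosen set S. *)
fun residual_cost :: "(nat set \<Rightarrow> real) \<Rightarrow> (nat \<Rightarrow> real) \<Rightarrow> real \<Rightarrow> nat set \<Rightarrow> nat list \<Rightarrow> real" where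
  "residual_cost u cc U S [] = 0"
| "residual_cost u cc U S (x # xs) = cc x * (U - u S) + residual_cost u cc U (insert x S) xs"

lemma residual_cost_conv_sum:
  "residual_cost u cc U S xs = (\<Sum>j<length xs. cc (xs ! j) * (U - u (S \<union> set (take j xs))))"
  by (induction xs arbitrary: S) (simp_all add: sum.lessThan_Suc_shift insert_commute del: sum.lessThan_Suc)

lemma residual_cost_append:
  "residual_cost u cc U S (xs @ ys) = residual_cost u cc U S xs + residual_cost u cc U (S \<union> set xs) ys"
  by (induction xs arbitrary: S) auto

lemma residual_cost_insert_diff:
  "residual_cost u cc U S xs - residual_cost u cc U (insert e S) xs
    = (\<Sum>j<length xs. cc (xs ! j) * marg u e (S \<union> set (take j xs)))"
  unfolding residual_cost_conv_sum sum_subtractf[symmetric] marg_def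
  by (intro sum.cong) (auto simp: algebra_simps)

definition prefix_cost :: "(nat \<Rightarrow> real) \<Rightarrow> nat list \<Rightarrow> nat \<Rightarrow> real" where
  "prefix_cost cc p j = sum cc (set (take (Suc j) p))"

definition gain :: "(nat set \<Rightarrow> real) \<Rightarrow> nat list \<Rightarrow> nat \<Rightarrow> real" where
  "gain u p j = u (set (take (Suc j) p)) - u (set (take j p))"

lemma prefix_cost_eq_sum_nth:
  assumes "distinct p" "j < length p"
  shows "prefix_cost cc p j = (\<Sum>i<Suc j. cc (p ! i))"
proof -
  have "set (take (Suc j) p) = nth p ` {..<Suc j}" using nth_image[of "Suc j" p] assms(2) by (simp add: atLeast0LessThan)
  moreover have "inj_on (nth p) {..<Suc j}" using assms by (intro inj_on_nth) auto
  ultimately show ?thesis unfolding prefix_cost_def by (simp add: sum.reindex)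
qed

lemma sum_gain: "m \<le> k \<Longrightarrow> (\<Sum>q\<in>{m..<k}. gain u p q) = u (set (take k p)) - u (set (take m p))"
  unfolding gain_def by (rule sum_Suc_diff')

lemma mssc_obj_conv_gain: "mssc_obj u c p = (\<Sum>j<length p. c (set (take (Suc j) p)) * gain u p j)"
  unfolding mssc_obj_def gain_def by (simp add: sum.atLeast1_atMost_eq)

lemma mssc_obj_modular_conv_sum:
  assumes "distinct p"
  shows "mssc_obj u (sum cc) p = (\<Sum>j<length p. cc (p ! j) * (u (set p) - u (set (take j p))))"
proof -
  have "mssc_obj u (sum cc) p = (\<Sum>j<length p. (\<Sum>i<Suc j. cc (p ! i)) * gain u p j)"
    unfolding mssc_obj_conv_gain using prefix_cost_eq_sum_nth[OF assms]
    by (intro sum.cong) (auto simp: prefix_cost_def)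
  also have "\<dots> = (\<Sum>j<length p. cc (p ! j) * (u (set (take (length p) p)) - u (set (take j p))))"
    unfolding gain_def by (rule sum_prefix_sums_mult_diff)
  finally show ?thesis by simp
qed

lemma mssc_obj_modular_eq_residual_cost:
  "distinct p \<Longrightarrow> mssc_obj u (sum cc) p = residual_cost u cc (u (set p)) {} p"
  by (simp add: mssc_obj_modular_conv_sum residual_cost_conv_sum)

lemma move_eq_append:
  assumes "k \<le> P" "P < length p"
  shows "move P k p = take k p @ [p ! P] @ drop k (take P p) @ drop (Suc P) p"
  unfolding move_def Let_def using assms by (simp add: min_def)

lemma mset_move:
  assumes "i < length p"
  shows "mset (move i j p) = mset p"
proof -
  define r where "r = take i p @ drop (Suc i) p"
  have "mset (move i j p) = mset (take j r @ drop j r) + {#p ! i#}"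
    unfolding move_def Let_def r_def[symmetric] by (simp del: append_take_drop_id)
  also have "\<dots> = mset p"
    unfolding append_take_drop_id r_def by (subst (3) id_take_nth_drop[OF assms]) simp
  finally show ?thesis .
qed

lemma mssc_obj_move_diff:
  assumes "distinct p" "k \<le> P" "P < length p"
  shows "mssc_obj u (sum cc) p - mssc_obj u (sum cc) (move P k p)
    = (\<Sum>j\<in>{k..<P}. cc (p ! j) * marg u (p ! P) (set (take j p)))
      - cc (p ! P) * (u (set (take P p)) - u (set (take k p)))"
proof -
  define A M e Z where "A = take k p" and "M = drop k (take P p)" and "e = p ! P"
    and "Z = drop (Suc P) p"
  have take_P: "take P p = A @ M"
    unfolding A_def M_def using assms(2) by (metis append_take_drop_id min.absorb1 take_take)
  have p_eq: "p = A @ M @ [e] @ Z"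
    using id_take_nth_drop[OF assms(3)] unfolding take_P e_def Z_def by simp
  have move_eq: "move P k p = A @ [e] @ M @ Z"
    unfolding move_eq_append[OF assms(2,3)] A_def M_def e_def Z_def by simp
  define U where "U = u (set p)"
  have "mset (move P k p) = mset p" using mset_move[OF assms(3)] .
  then have "distinct (move P k p)" "set (move P k p) = set p"
    using assms(1) mset_eq_imp_distinct_iff mset_eq_setD by blast+
  then have "mssc_obj u (sum cc) (move P k p) = residual_cost u cc U {} (move P k p)"
    unfolding U_def by (simp add: mssc_obj_modular_eq_residual_cost)
  then have obj_move: "mssc_obj u (sum cc) (move P k p) = residual_cost u cc U {} (A @ [e] @ M @ Z)"
    unfolding move_eq .
  have obj_p: "mssc_obj u (sum cc) p = residual_cost u cc U {} (A @ M @ [e] @ Z)"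
    unfolding U_def mssc_obj_modular_eq_residual_cost[OF assms(1)] by (subst (2) p_eq) (rule refl)
  have "mssc_obj u (sum cc) p - mssc_obj u (sum cc) (move P k p)
    = (residual_cost u cc U (set A) M - residual_cost u cc U (insert e (set A)) M)
      - cc e * (u (set A \<union> set M) - u (set A))"
    unfolding obj_move obj_p by (simp add: residual_cost_append insert_commute algebra_simps)
  also have "\<dots> = (\<Sum>j<P - k. cc (p ! (k + j)) * marg u e (set (take (k + j) p)))
      - cc e * (u (set (take P p)) - u (set A))"
  proof -
    have "M ! j = p ! (k + j)" "set A \<union> set (take j M) = set (take (k + j) p)" if "j < P - k" for j
      using that assms(2,3) unfolding A_def M_def by (auto simp: take_add drop_take min_def)
    moreover have "length M = P - k" unfolding M_def using assms(2,3) by simp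
    ultimately show ?thesis unfolding residual_cost_insert_diff take_P by simp
  qed
  finally show ?thesis
    unfolding sum.atLeastLessThan_shift_0[of _ k P] A_def e_def by (simp add: atLeast0LessThan)
qed

lemma in_permsD:
  assumes "p \<in> perms n"
  shows "distinct p" "set p = {1..n}" "length p = n"
  using assms distinct_card[of p] unfolding perms_def permutations_of_set_def by auto

lemma move_in_perms:
  assumes "p \<in> perms n" "i < length p"
  shows "move i j p \<in> perms n"
proof -
  have "mset (move i j p) = mset p" using mset_move[OF assms(2)] .
  then show ?thesis using assms(1) mset_eq_imp_distinct_iff mset_eq_setD
    unfolding perms_def permutations_of_set_def by blast
qed

lemma neighbors_subset_perms: "p \<in> perms n \<Longrightarrow> neighbors p \<subseteq> perms n"
  unfolding neighbors_def using move_in_perms by blast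

lemma self_in_neighbors: "p \<noteq> [] \<Longrightarrow> p \<in> neighbors p"
  unfolding neighbors_def move_def by (intro CollectI exI[of _ 0]) (simp add: Cons_nth_drop_Suc)

context submodular_cover
begin

abbreviation obj :: "nat list \<Rightarrow> real" where
  "obj \<equiv> mssc_obj u (sum cc)"

lemma prefix_cost_nonneg: "p \<in> perms n \<Longrightarrow> 0 \<le> prefix_cost cc p j"
  unfolding prefix_cost_def using cost_pos in_permsD(2)[of p n] set_take_subset[of "Suc j" p]
  by (intro sum_nonneg) (auto intro: less_imp_le)

lemma prefix_cost_mono:
  assumes "p \<in> perms n" "j \<le> j'"
  shows "prefix_cost cc p j \<le> prefix_cost cc p j'"
  unfolding prefix_cost_def using cost_pos in_permsD(2)[OF assms(1)] assms(2)
    set_take_subset_set_take[of "Suc j" "Suc j'" p] set_take_subset[of "Suc j'" p]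
  by (intro sum_mono2) (auto intro: less_imp_le)

lemma cost_nth_pos: "p \<in> perms n \<Longrightarrow> i < n \<Longrightarrow> 0 < cc (p ! i)"
  using cost_pos in_permsD[of p n] nth_mem[of i p] by auto

lemma gain_nonneg: "p \<in> perms n \<Longrightarrow> 0 \<le> gain u p j"
  unfolding gain_def using in_permsD(2)[of p n] set_take_subset[of "Suc j" p]
  by (intro u_mono[THEN diff_ge_0_iff_ge[THEN iffD2]] set_take_subset_set_take) auto

lemma obj_nonneg: "p \<in> perms n \<Longrightarrow> 0 \<le> obj p"
  unfolding mssc_obj_conv_gain prefix_cost_def[symmetric]
  by (intro sum_nonneg mult_nonneg_nonneg prefix_cost_nonneg gain_nonneg)

lemma cover_gap_le_marg_plus_gain:
  assumes "\<sigma> \<in> perms n" "S \<subseteq> {1..n}" "m \<le> n"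
  shows "u {1..n} - u S \<le> (\<Sum>q<m. marg u (\<sigma> ! q) S) + (\<Sum>q\<in>{m..<n}. gain u \<sigma> q)"
proof -
  note \<sigma> = in_permsD[OF assms(1)]
  have prefix: "set (take m \<sigma>) = nth \<sigma> ` {..<m}" "set (take m \<sigma>) \<subseteq> {1..n}"
    using nth_image[of m \<sigma>] assms(3) \<sigma> set_take_subset[of m \<sigma>] by (auto simp: atLeast0LessThan)
  have "inj_on (nth \<sigma>) {..<m}" using \<sigma> assms(3) by (intro inj_on_nth) auto
  then have "(\<Sum>x\<in>set (take m \<sigma>). marg u x S) = (\<Sum>q<m. marg u (\<sigma> ! q) S)"
    unfolding prefix(1) by (rule sum.reindex_cong) auto
  moreover have "u (set (take m \<sigma>)) \<le> u (S \<union> set (take m \<sigma>))"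
    using prefix(2) assms(2) by (intro u_mono) auto
  moreover have "u (S \<union> set (take m \<sigma>)) \<le> u S + (\<Sum>x\<in>set (take m \<sigma>). marg u x S)"
    using assms(2) prefix(2) by (rule union_le_sum_marg)
  moreover have "(\<Sum>q\<in>{m..<n}. gain u \<sigma> q) = u {1..n} - u (set (take m \<sigma>))"
    using sum_gain[OF assms(3)] \<sigma> by simp
  ultimately show ?thesis by linarith
qed

end

context submodular_cover
begin

lemma suffix_marg_le_improvement:
  assumes p: "p \<in> perms n" and e: "e \<in> {1..n}" and "k \<le> n"
    and D: "\<forall>p' \<in> neighbors p. obj p - obj p' \<le> D"
  shows "(\<Sum>j\<in>{k..<n}. cc (p ! j) * marg u e (set (take j p)))
    \<le> D + cc e * (u {1..n} - u (set (take k p)))"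
proof -
  note p' = in_permsD[OF p]
  obtain P where P: "P < n" "p ! P = e" using e p' by (metis in_set_conv_nth)
  have "p \<in> neighbors p" using P(1) p'(3) by (intro self_in_neighbors) auto
  then have "obj p - obj p \<le> D" using D by blast
  then have "0 \<le> D" by simp
  have gap: "u (set (take j p)) \<le> u {1..n}" for j
    using p' set_take_subset[of j p] by (intro u_mono) auto
  have e_pos: "0 < cc e" using cost_pos e by blast
  have "e \<in> set (take j p)" if "P < j" for j
    using P p'(3) that by (metis length_take min_less_iff_conj nth_mem nth_take)
  then have late_zero: "(\<Sum>j\<in>{i..<n}. cc (p ! j) * marg u e (set (take j p))) = 0" if "P < i" for i
    using that by (intro sum.neutral ballI) (simp add: marg_eq_0)
  show ?thesis
  proof (cases "k \<le> P")
    case True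
    have "move P k p \<in> neighbors p" unfolding neighbors_def using True P p'(3) by force
    then have improvement: "(\<Sum>j\<in>{k..<P}. cc (p ! j) * marg u e (set (take j p)))
        - cc e * (u (set (take P p)) - u (set (take k p))) \<le> D"
      using D mssc_obj_move_diff[OF p'(1) True] P p' by auto
    have "set (take (Suc P) p) = set (take P p) \<union> {e}"
      using P p' by (simp add: take_Suc_conv_app_nth)
    then have at_P: "cc (p ! P) * marg u e (set (take P p))
        = cc e * (u (set (take (Suc P) p)) - u (set (take P p)))"
      unfolding marg_def P(2) by simp
    let ?g = "\<lambda>j. cc (p ! j) * marg u e (set (take j p))"
    have "sum ?g {k..<n} = sum ?g {k..<P} + sum ?g {P..<n}"
      using True P(1) by (intro sum.atLeastLessThan_concat[symmetric]) auto
    also have "sum ?g {P..<n} = ?g P + sum ?g {Suc P..<n}"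
      using P(1) by (intro sum.atLeast_Suc_lessThan)
    also have "sum ?g {Suc P..<n} = 0" using late_zero by simp
    also have "sum ?g {k..<P} + (?g P + 0)
        = sum ?g {k..<P} + cc e * (u (set (take (Suc P) p)) - u (set (take P p)))"
      using at_P by simp
    also have "\<dots> \<le> D + cc e * (u (set (take (Suc P) p)) - u (set (take k p)))"
      using improvement by (simp add: algebra_simps)
    also have "\<dots> \<le> D + cc e * (u {1..n} - u (set (take k p)))"
      using gap e_pos by (intro add_left_mono mult_left_mono) auto
    finally show ?thesis .
  next
    case False
    then show ?thesis using late_zero[of k] \<open>0 \<le> D\<close> gap[of k] e_pos by simp
  qed
qed

end

locale perm_pair = submodular_cover +
  fixes p \<sigma> :: "nat list"
  assumes p_perm: "p \<in> perms n" and \<sigma>_perm: "\<sigma> \<in> perms n"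
begin

definition early :: "nat \<Rightarrow> nat \<Rightarrow> bool" where
  "early j q \<longleftrightarrow> 2 * prefix_cost cc \<sigma> q \<le> prefix_cost cc p j"

lemma early_prefix:
  obtains m where "m \<le> n" "{..<n} \<inter> {q. early j q} = {..<m}" "{..<n} \<inter> - {q. early j q} = {m..<n}"
proof -
  have "early j q" if "q \<le> q'" "early j q'" for q q'
    using prefix_cost_mono[OF \<sigma>_perm that(1)] that(2) unfolding early_def by linarith
  then show thesis using down_closed_lessThan[of n "early j"] that by blast
qed

lemma early_suffix:
  obtains k where "k \<le> n" "{..<n} \<inter> {j. early j q} = {k..<n}"
proof -
  have "\<not> early j q" if "j \<le> j'" "\<not> early j' q" for j j'
    using prefix_cost_mono[OF p_perm that(1)] that(2) unfolding early_def by linarith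
  then obtain k where "k \<le> n" "{..<n} \<inter> - {j. \<not> early j q} = {k..<n}"
    using down_closed_lessThan[of n "\<lambda>j. \<not> early j q"] by blast
  then show thesis by (intro that[of k]) auto
qed

lemma obj_le_early_pairs_plus_late_pairs:
  "obj p \<le> (\<Sum>j<n. \<Sum>q<n. if early j q then cc (p ! j) * marg u (\<sigma> ! q) (set (take j p)) else 0)
    + (\<Sum>j<n. \<Sum>q<n. if early j q then 0 else cc (p ! j) * gain u \<sigma> q)"
proof -
  note p = in_permsD[OF p_perm]
  have "obj p = (\<Sum>j<n. cc (p ! j) * (u {1..n} - u (set (take j p))))"
    using mssc_obj_modular_conv_sum[OF p(1)] p by simp
  also have "\<dots> \<le> (\<Sum>j<n. \<Sum>q<n. if early j q then cc (p ! j) * marg u (\<sigma> ! q) (set (take j p))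
      else cc (p ! j) * gain u \<sigma> q)"
  proof (rule sum_mono)
    fix j assume "j \<in> {..<n}"
    obtain m where m: "m \<le> n" "{..<n} \<inter> {q. early j q} = {..<m}" "{..<n} \<inter> - {q. early j q} = {m..<n}"
      by (rule early_prefix)
    have "u {1..n} - u (set (take j p))
        \<le> (\<Sum>q<m. marg u (\<sigma> ! q) (set (take j p))) + (\<Sum>q\<in>{m..<n}. gain u \<sigma> q)"
      using p set_take_subset[of j p] by (intro cover_gap_le_marg_plus_gain[OF \<sigma>_perm _ m(1)]) auto
    moreover have "0 < cc (p ! j)" using cost_nth_pos[OF p_perm] \<open>j \<in> {..<n}\<close> by simp
    ultimately show "cc (p ! j) * (u {1..n} - u (set (take j p)))
        \<le> (\<Sum>q<n. if early j q then cc (p ! j) * marg u (\<sigma> ! q) (set (take j p)) else cc (p ! j) * gain u \<sigma> q)"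
      by (simp add: sum.If_cases m(2,3) flip: sum_distrib_left distrib_left)
  qed
  also have "\<dots> = (\<Sum>j<n. \<Sum>q<n. if early j q then cc (p ! j) * marg u (\<sigma> ! q) (set (take j p)) else 0)
      + (\<Sum>j<n. \<Sum>q<n. if early j q then 0 else cc (p ! j) * gain u \<sigma> q)"
    unfolding sum.distrib[symmetric] by (intro sum.cong refl) auto
  finally show ?thesis .
qed

lemma late_pairs_le:
  "(\<Sum>j<n. \<Sum>q<n. if early j q then 0 else cc (p ! j) * gain u \<sigma> q) \<le> 2 * obj \<sigma>"
proof -
  note p = in_permsD[OF p_perm] and \<sigma> = in_permsD[OF \<sigma>_perm]
  have "(\<Sum>j<n. \<Sum>q<n. if early j q then 0 else cc (p ! j) * gain u \<sigma> q)
      = (\<Sum>q<n. gain u \<sigma> q * (\<Sum>j \<in> {..<n} \<inter> - {j. early j q}. cc (p ! j)))"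
    by (subst sum.swap) (simp add: sum.If_cases sum_distrib_left mult.commute)
  also have "\<dots> \<le> (\<Sum>q<n. gain u \<sigma> q * (2 * prefix_cost cc \<sigma> q))"
  proof (intro sum_mono mult_left_mono gain_nonneg[OF \<sigma>_perm])
    fix q
    show "(\<Sum>j \<in> {..<n} \<inter> - {j. early j q}. cc (p ! j)) \<le> 2 * prefix_cost cc \<sigma> q"
    proof (rule sum_le_of_prefix_sums_le[of n])
      show "(\<Sum>i<Suc j. cc (p ! i)) \<le> 2 * prefix_cost cc \<sigma> q" if "j \<in> {..<n} \<inter> - {j. early j q}" for j
        using that prefix_cost_eq_sum_nth[OF p(1), of j] p(3) unfolding early_def by auto
    qed (use cost_nth_pos[OF p_perm] prefix_cost_nonneg[OF \<sigma>_perm] in \<open>auto intro: less_imp_le\<close>)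
  qed
  also have "\<dots> = 2 * obj \<sigma>"
    unfolding mssc_obj_conv_gain prefix_cost_def[symmetric] \<sigma>(3) by (simp add: sum_distrib_left algebra_simps)
  finally show ?thesis .
qed

lemma early_pairs_le:
  fixes D :: real
  assumes D: "\<forall>p' \<in> neighbors p. obj p - obj p' \<le> D"
  shows "(\<Sum>j<n. \<Sum>q<n. if early j q then cc (p ! j) * marg u (\<sigma> ! q) (set (take j p)) else 0)
    \<le> real n * D + obj p / 2"
proof -
  note p = in_permsD[OF p_perm] and \<sigma> = in_permsD[OF \<sigma>_perm]
  have per_q: "(\<Sum>j<n. if early j q then cc (p ! j) * marg u (\<sigma> ! q) (set (take j p)) else 0)
      \<le> D + (\<Sum>i<n. if early i q then cc (\<sigma> ! q) * gain u p i else 0)" if "q < n" for q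
  proof -
    obtain k where k: "k \<le> n" "{..<n} \<inter> {j. early j q} = {k..<n}" by (rule early_suffix)
    have "\<sigma> ! q \<in> {1..n}" using \<sigma> that nth_mem by blast
    then have "(\<Sum>j\<in>{k..<n}. cc (p ! j) * marg u (\<sigma> ! q) (set (take j p)))
        \<le> D + cc (\<sigma> ! q) * (u {1..n} - u (set (take k p)))"
      by (rule suffix_marg_le_improvement[OF p_perm _ k(1) D])
    moreover have "u {1..n} - u (set (take k p)) = (\<Sum>i\<in>{k..<n}. gain u p i)"
      using sum_gain[OF k(1)] p by simp
    ultimately show ?thesis by (simp add: sum.If_cases k(2) sum_distrib_left)
  qed
  have "(\<Sum>j<n. \<Sum>q<n. if early j q then cc (p ! j) * marg u (\<sigma> ! q) (set (take j p)) else 0)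
      = (\<Sum>q<n. \<Sum>j<n. if early j q then cc (p ! j) * marg u (\<sigma> ! q) (set (take j p)) else 0)"
    by (rule sum.swap)
  also have "\<dots> \<le> (\<Sum>q<n. D + (\<Sum>i<n. if early i q then cc (\<sigma> ! q) * gain u p i else 0))"
    using per_q by (intro sum_mono) auto
  also have "\<dots> = real n * D + (\<Sum>q<n. \<Sum>i<n. if early i q then cc (\<sigma> ! q) * gain u p i else 0)"
    by (simp add: sum.distrib)
  also have "\<dots> = real n * D + (\<Sum>i<n. gain u p i * (\<Sum>q \<in> {..<n} \<inter> {q. early i q}. cc (\<sigma> ! q)))"
    by (subst sum.swap) (simp add: sum.If_cases sum_distrib_left mult.commute)
  also have "\<dots> \<le> real n * D + (\<Sum>i<n. gain u p i * (prefix_cost cc p i / 2))"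
  proof (intro add_left_mono sum_mono mult_left_mono gain_nonneg[OF p_perm])
    fix i
    show "(\<Sum>q \<in> {..<n} \<inter> {q. early i q}. cc (\<sigma> ! q)) \<le> prefix_cost cc p i / 2"
    proof (rule sum_le_of_prefix_sums_le[of n])
      show "(\<Sum>j<Suc q. cc (\<sigma> ! j)) \<le> prefix_cost cc p i / 2" if "q \<in> {..<n} \<inter> {q. early i q}" for q
        using that prefix_cost_eq_sum_nth[OF \<sigma>(1), of q] \<sigma>(3) unfolding early_def by auto
    qed (use cost_nth_pos[OF \<sigma>_perm] prefix_cost_nonneg[OF p_perm] in \<open>auto intro: less_imp_le\<close>)
  qed
  also have "\<dots> = real n * D + obj p / 2"
    unfolding mssc_obj_conv_gain prefix_cost_def[symmetric] p(3) by (simp add: sum_divide_distrib mult.commute)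
  finally show ?thesis .
qed

lemma obj_le_four_obj_plus:
  fixes D :: real
  assumes "\<forall>p' \<in> neighbors p. obj p - obj p' \<le> D"
  shows "obj p \<le> 4 * obj \<sigma> + 2 * real n * D"
  using obj_le_early_pairs_plus_late_pairs late_pairs_le early_pairs_le[OF assms] by linarith

end

context submodular_cover
begin

lemma ls_step_contracts:
  assumes "n > 0" "p \<in> perms n" "\<sigma> \<in> perms n" "ls_step u (sum cc) p q"
  shows "q \<in> perms n" "obj q - 4 * obj \<sigma> \<le> (1 - 1 / (2 * real n)) * (obj p - 4 * obj \<sigma>)"
proof -
  interpret perm_pair n u cc p \<sigma> using assms(2,3) by unfold_locales
  have "q \<in> neighbors p" and best: "\<forall>p' \<in> neighbors p. obj p - obj p' \<le> obj p - obj q"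
    using assms(4) unfolding ls_step_def by auto
  then show "q \<in> perms n" using neighbors_subset_perms[OF assms(2)] by blast
  have "obj p \<le> 4 * obj \<sigma> + 2 * real n * (obj p - obj q)" using best by (rule obj_le_four_obj_plus)
  then show "obj q - 4 * obj \<sigma> \<le> (1 - 1 / (2 * real n)) * (obj p - 4 * obj \<sigma>)"
    using assms(1) by (simp add: field_simps)
qed

lemma ls_run_contracts:
  assumes "n > 0" "\<sigma> \<in> perms n" "run 0 \<in> perms n"
    and "\<forall>k < K. ls_step u (sum cc) (run k) (run (Suc k))" and "k \<le> K"
  shows "run k \<in> perms n \<and>
    obj (run k) - 4 * obj \<sigma> \<le> (1 - 1 / (2 * real n)) ^ k * (obj (run 0) - 4 * obj \<sigma>)"
  using assms(5)
proof (induction k)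
  case (Suc k)
  then have run_k: "run k \<in> perms n"
    and IH: "obj (run k) - 4 * obj \<sigma> \<le> (1 - 1 / (2 * real n)) ^ k * (obj (run 0) - 4 * obj \<sigma>)"
    and step: "ls_step u (sum cc) (run k) (run (Suc k))"
    using assms(4) by auto
  have "0 \<le> 1 - 1 / (2 * real n)" using assms(1) by (simp add: field_simps)
  with IH have "(1 - 1 / (2 * real n)) * (obj (run k) - 4 * obj \<sigma>)
      \<le> (1 - 1 / (2 * real n)) * ((1 - 1 / (2 * real n)) ^ k * (obj (run 0) - 4 * obj \<sigma>))"
    by (rule mult_left_mono)
  then show ?case using ls_step_contracts[OF assms(1) run_k assms(2) step] by auto
qed (use assms(3) in simp)

end

lemma contraction_pow_ls_iters:
  fixes d \<epsilon> :: real
  assumes "n > 0" "0 < \<epsilon>" "0 < d"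
  shows "(1 - 1 / (2 * real n)) ^ ls_iters n d \<epsilon> * d \<le> \<epsilon>"
proof -
  define x K where "x = 1 / (2 * real n)" and "K = ls_iters n d \<epsilon>"
  have x: "0 < x" "x \<le> 1" using assms(1) by (auto simp: x_def field_simps)
  show ?thesis
  proof (cases "d \<le> \<epsilon>")
    case True
    have "(1 - x) ^ K \<le> 1" using x by (intro power_le_one) auto
    then have "(1 - x) ^ K * d \<le> 1 * d" using assms(3) by (intro mult_right_mono) auto
    then show ?thesis using True unfolding x_def K_def by simp
  next
    case False
    then have ln_pos: "0 < ln (d / \<epsilon>)" using assms(2) by simp
    have "(1 - x) ^ K \<le> exp (- x) ^ K"
      using x exp_ge_add_one_self[of "- x"] by (intro power_mono) auto
    also have "\<dots> = exp (- (x * K))" by (simp add: exp_of_nat_mult[symmetric] mult.commute)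
    also have "\<dots> \<le> exp (- ln (d / \<epsilon>))"
    proof -
      (* ls_iters grants a factor n^2 more steps than the contraction rate needs. *)
      have "ln (d / \<epsilon>) \<le> real n ^ 2 * ln (d / \<epsilon>)"
        using ln_pos assms(1) by (intro mult_le_cancel_right1[THEN iffD2]) (simp add: one_le_power)
      also have "\<dots> = x * (2 * real n ^ 3 * ln (d / \<epsilon>))"
        using assms(1) by (simp add: x_def power2_eq_square power3_eq_cube)
      also have "\<dots> \<le> x * K"
        unfolding K_def ls_iters_def using x by (intro mult_left_mono real_nat_ceiling_ge) auto
      finally show ?thesis by simp
    qed
    also have "\<dots> = \<epsilon> / d" using assms(2,3) by (simp add: exp_minus)
    finally show ?thesis using assms(3) unfolding x_def K_def by (simp add: field_simps)
  qed
qed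

lemma mssc_opt_attained:
  obtains \<sigma> where "\<sigma> \<in> perms n" "mssc_obj u c \<sigma> = mssc_opt n u c"
proof -
  have "mssc_opt n u c \<in> mssc_obj u c ` perms n"
    unfolding mssc_opt_def perms_def by (intro Min_in) simp_all
  with that show thesis by (metis imageE)
qed

lemma four_plus_approx_of_contraction:
  fixes opt f\<^sub>0 f r d \<epsilon> :: real
  assumes "0 \<le> opt" "f\<^sub>0 \<le> d * opt" "f - 4 * opt \<le> r * (f\<^sub>0 - 4 * opt)" "0 \<le> r"
    and "0 < d \<Longrightarrow> r * d \<le> \<epsilon>" "0 < \<epsilon>"
  shows "f \<le> (4 + \<epsilon>) * opt"
proof (cases "f\<^sub>0 \<le> 4 * opt")
  case True
  then have "r * (f\<^sub>0 - 4 * opt) \<le> 0" using assms(4) by (simp add: mult_nonneg_nonpos)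
  moreover have "4 * opt \<le> (4 + \<epsilon>) * opt" using assms(1,6) by (intro mult_right_mono) auto
  ultimately show ?thesis using assms(3) by linarith
next
  case False
  then have "0 < d * opt" using assms(1,2) by linarith
  then have "0 < d" using assms(1) by (simp add: zero_less_mult_iff)
  have "f\<^sub>0 - 4 * opt \<le> d * opt" using assms(1,2) by linarith
  then have "f - 4 * opt \<le> r * (d * opt)" using assms(3,4) by (meson mult_left_mono order_trans)
  also have "\<dots> = (r * d) * opt" by (simp only: mult.assoc)
  also have "\<dots> \<le> \<epsilon> * opt" using assms(5)[OF \<open>0 < d\<close>] assms(1) by (rule mult_right_mono)
  finally show ?thesis by (simp add: algebra_simps)
qed

theorem theorem2:
  fixes n :: nat and u :: "nat set \<Rightarrow> real" and cc :: "nat \<Rightarrow> real"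
    and \<epsilon> d :: real and \<pi> :: "nat list" and run :: "nat \<Rightarrow> nat list"
  defines "c \<equiv> (\<lambda>S. \<Sum>i\<in>S. cc i)"
  assumes "n > 0"
    and "\<forall>S \<subseteq> {1..n}. u S \<ge> 0"
    and "u {} = 0"
    and "monotone_sf n u"
    and "submodular_sf n u"
    and "second_order_supermodular_sf n u"
    and "\<forall>i \<in> {1..n}. cc i > 0"
    and "\<epsilon> > 0"
    and "is_approx n u c d \<pi>"
    and "run 0 = \<pi>"
    and "\<forall>k < ls_iters n d \<epsilon>. ls_step u c (run k) (run (Suc k))"
  shows "is_approx n u c (4 + \<epsilon>) (run (ls_iters n d \<epsilon>))"
proof -
  interpret submodular_cover n u cc using assms(5,6,8) by unfold_locales
  obtain \<sigma> where \<sigma>: "\<sigma> \<in> perms n" "obj \<sigma> = mssc_opt n u (sum cc)"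
    using mssc_opt_attained by blast
  have \<pi>: "\<pi> \<in> perms n" "obj \<pi> \<le> d * obj \<sigma>"
    using assms(10) unfolding is_approx_def c_def \<sigma>(2) by auto
  define K r where "K = ls_iters n d \<epsilon>" and "r = (1 - 1 / (2 * real n)) ^ K"
  have run: "run K \<in> perms n" "obj (run K) - 4 * obj \<sigma> \<le> r * (obj \<pi> - 4 * obj \<sigma>)"
    using ls_run_contracts[OF assms(2) \<sigma>(1), of run K K] \<pi>(1) assms(11,12)
    unfolding c_def K_def r_def by auto
  have "0 \<le> r" unfolding r_def using assms(2) by (simp add: field_simps)
  have "obj (run K) \<le> (4 + \<epsilon>) * obj \<sigma>"
  proof (rule four_plus_approx_of_contraction[OF obj_nonneg[OF \<sigma>(1)] \<pi>(2) run(2) \<open>0 \<le> r\<close> _ assms(9)])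
    show "0 < d \<Longrightarrow> r * d \<le> \<epsilon>"
      unfolding r_def K_def using contraction_pow_ls_iters[OF assms(2,9)] .
  qed
  then show ?thesis using run(1) unfolding is_approx_def c_def K_def \<sigma>(2) by simp
qed

end
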